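(* Let $\mathbf x,\mathbf y\in\mathbb R^\infty$ be such that the functions $t\mapsto\|\mathbf x\|_t$ and $t\mapsto\|\mathbf y\|_t$ on $(0,\infty)$ are not identical. Then the set $\{t\in(0,\infty):\|\mathbf x\|_t=\|\mathbf y\|_t\}$ is finite. Consequently, for any finite set $\mathcal X\subseteq\mathbb R^\infty$, the set of points $s\in(0,\infty)$ for which there exist $\mathbf x,\mathbf y\in\mathcal X$ with $\|\mathbf x\|_s=\|\mathbf y\|_s$ but $t\mapsto\|\mathbf x\|_t$ not identical to $t\mapsto\|\mathbf y\|_t$ is finite.
   Context: $\mathbb R^\infty$ is the set of real sequences with only finitely many nonzero entries, and $\|\mathbf x\|_t=(\sum_n|x_n|^t)^{1/t}$ for $t\in(0,\infty)$. *)

theory Defs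
  imports "HOL-Analysis.Analysis"
begin

definition Rinf :: "(nat \<Rightarrow> real) set" where
  "Rinf = {x. finite {n. x n \<noteq> 0}}"

definition tnorm :: "real \<Rightarrow> (nat \<Rightarrow> real) \<Rightarrow> real" where
  "tnorm t x = (\<Sum>n\<in>{n. x n \<noteq> 0}. \<bar>x n\<bar> powr t) powr (1 / t)"

end

theory Submission
  imports Defs
begin

(* For x, y in R^infinity and t > 0 we have  ||x||_t = ||y||_t  iff  S_t(x) = S_t(y),  where
   S_t(x) = \<Sum>_n |x_n|^t  is the power sum over the support.  Writing |x_n|^t = exp(t ln|x_n|),
   the difference  S_t(x) - S_t(y)  is an exponential sum  \<Sum>_{i\<in>I} c_i exp(e_i t)  with
   finitely many terms.  The key fact is the classical one: an exponential sum with |I| terms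
   that vanishes at |I| distinct points vanishes identically.  It is proved by induction on |I|:
   multiplying by exp(-e_\<mu> t) makes one exponent zero without moving the zeros, and Rolle's
   theorem then yields |I| - 1 zeros of the derivative, which is an exponential sum with one term
   fewer.  Hence a nonzero exponential sum has only finitely many zeros, which gives the first
   claim; the second follows since a finite set X has only finitely many pairs. *)

text \<open>The location of the
  new zeros is what keeps them distinct during the induction.\<close>
lemma rolle_zero_count:
  fixes f f' :: "real \<Rightarrow> real"
  assumes der: "\<And>t. (f has_real_derivative f' t) (at t)"
  shows "finite Z \<Longrightarrow> card Z = Suc n \<Longrightarrow> (\<forall>z\<in>Z. f z = 0) \<Longrightarrow>
    \<exists>W. finite W \<and> card W = n \<and> (\<forall>w\<in>W. f' w = 0) \<and> W \<subseteq> {Min Z<..<Max Z}"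
proof (induction n arbitrary: Z)
  case 0
  then show ?case by (intro exI[of _ "{}"]) auto
next
  case (Suc n)
  define a where "a = Max Z"
  define Z' where "Z' = Z - {a}"
  have aZ: "a \<in> Z" using Suc.prems unfolding a_def by (intro Max_in) auto
  have Z': "finite Z'" "card Z' = Suc n" using Suc.prems aZ unfolding Z'_def by auto
  obtain W' where W': "finite W'" "card W' = n" "\<forall>w\<in>W'. f' w = 0" "W' \<subseteq> {Min Z'<..<Max Z'}"
    using Suc.IH[OF Z'(1,2)] Suc.prems(3) unfolding Z'_def by auto
  define b where "b = Max Z'"
  have bZ': "b \<in> Z'" using Z' unfolding b_def by (intro Max_in) auto
  have ba: "b < a"
    using bZ' Suc.prems(1) unfolding Z'_def a_def by (metis DiffE Max_ge insertI1 order_le_less)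
  have "f b = f a" using bZ' aZ Suc.prems(3) unfolding Z'_def by auto
  moreover have "continuous_on {b..a} f"
    using der by (meson DERIV_continuous continuous_at_imp_continuous_on)
  ultimately obtain w where w: "b < w" "w < a" "DERIV f w :> 0"
    using Rolle[OF ba] der real_differentiable_def by blast
  have "f' w = 0" using w(3) der DERIV_unique by blast
  moreover have "w \<notin> W'" using W'(4) w(1) unfolding b_def by auto
  moreover have "Min Z \<le> Min Z'" "Min Z' \<le> b"
    using Z' Suc.prems(1) bZ' unfolding Z'_def by (auto intro: Min_antimono)
  ultimately show ?case
    using W' w unfolding a_def b_def by (intro exI[of _ "insert w W'"]) force
qed

definition exp_sum :: "'i set \<Rightarrow> ('i \<Rightarrow> real) \<Rightarrow> ('i \<Rightarrow> real) \<Rightarrow> real \<Rightarrow> real" where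
  "exp_sum I e c t = (\<Sum>i\<in>I. c i * exp (e i * t))"

lemma exp_sum_deriv:
  "(exp_sum I e c has_real_derivative exp_sum I e (\<lambda>i. c i * e i) t) (at t)"
  unfolding exp_sum_def by (auto intro!: derivative_eq_intros simp: algebra_simps)

text \<open>Shifting all exponents by \<open>a\<close> multiplies the sum by the nowhere vanishing factor
  \<open>exp (a * t)\<close>, so it does not change the zeros.\<close>
lemma exp_sum_shift:
  "exp_sum I (\<lambda>i. e i + a) c t = exp (a * t) * exp_sum I e c t"
  unfolding exp_sum_def sum_distrib_left
  by (intro sum.cong refl) (simp add: algebra_simps exp_add)

lemma exp_sum_vanishes:
  "finite I \<Longrightarrow> card I = n \<Longrightarrow> finite Z \<Longrightarrow> card Z = n \<Longrightarrow> (\<forall>z\<in>Z. exp_sum I e c z = 0)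
   \<Longrightarrow> exp_sum I e c t = 0"
proof (induction n arbitrary: I e c Z t)
  case 0
  then show ?case by (simp add: exp_sum_def)
next
  case (Suc n)
  obtain \<mu> where \<mu>: "\<mu> \<in> I" using Suc.prems by fastforce
  define e' where "e' = (\<lambda>i. e i - e \<mu>)"
  define c' where "c' = (\<lambda>i. c i * e' i)"
  define h where "h = exp_sum I e' c"
  have h_eq: "h s = exp (- e \<mu> * s) * exp_sum I e c s" for s
    using exp_sum_shift[of I e "- e \<mu>" c s] unfolding h_def e'_def by simp
  have h_deriv: "(h has_real_derivative exp_sum I e' c' s) (at s)" for s
    unfolding h_def c'_def by (rule exp_sum_deriv)
  text \<open>The term with index \<open>\<mu>\<close> has exponent zero and disappears from the derivative.\<close>
  have deriv_eq: "exp_sum I e' c' s = exp_sum (I - {\<mu>}) e' c' s" for s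
    unfolding exp_sum_def using Suc.prems(1) \<mu> by (simp add: sum.remove c'_def e'_def)
  obtain W where W: "finite W" "card W = n" "\<forall>w\<in>W. exp_sum I e' c' w = 0"
    using rolle_zero_count[OF h_deriv, of Z n] Suc.prems h_eq by auto
  have "exp_sum I e' c' s = 0" for s
    unfolding deriv_eq using Suc.prems \<mu> W deriv_eq by (intro Suc.IH[of _ W]) auto
  hence h_const: "h s = h u" for s u
    using DERIV_isconst_all[of h s u] h_deriv by metis
  obtain z where "z \<in> Z" using Suc.prems by fastforce
  hence "h z = 0" using h_eq Suc.prems(5) by auto
  hence "h t = 0" using h_const by metis
  thus ?case using h_eq by simp
qed

lemma exp_sum_zeros_finite:
  assumes "finite I" "exp_sum I e c t\<^sub>0 \<noteq> 0"
  shows "finite {t. exp_sum I e c t = 0}"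
proof (rule ccontr)
  assume "infinite {t. exp_sum I e c t = 0}"
  then obtain Z where "finite Z" "card Z = card I" "Z \<subseteq> {t. exp_sum I e c t = 0}"
    using infinite_arbitrarily_large by blast
  then have "exp_sum I e c t\<^sub>0 = 0" using assms(1) by (intro exp_sum_vanishes) auto
  with assms(2) show False by contradiction
qed

definition power_sum :: "real \<Rightarrow> (nat \<Rightarrow> real) \<Rightarrow> real" where
  "power_sum t x = (\<Sum>n\<in>{n. x n \<noteq> 0}. \<bar>x n\<bar> powr t)"

text \<open>Since \<open>a \<mapsto> a powr (1/t)\<close> is injective on nonnegative reals, equality of t-norms
  is equality of power sums.\<close>
lemma tnorm_eq_iff_power_sum_eq:
  assumes "t > 0"
  shows "tnorm t x = tnorm t y \<longleftrightarrow> power_sum t x = power_sum t y"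
proof -
  have "a powr (1/t) < b powr (1/t)" if "0 \<le> a" "a < b" for a b :: real
    using that assms by (intro powr_less_mono2) auto
  moreover have "power_sum t z \<ge> 0" for z
    unfolding power_sum_def by (intro sum_nonneg) auto
  ultimately show ?thesis
    unfolding tnorm_def power_sum_def[symmetric] by (metis linorder_neq_iff order_less_irrefl)
qed

lemma power_sum_diff_exp_sum:
  assumes "x \<in> Rinf" "y \<in> Rinf"
  shows "power_sum t x - power_sum t y = exp_sum ({n. x n \<noteq> 0} <+> {n. y n \<noteq> 0})
     (case_sum (\<lambda>n. ln \<bar>x n\<bar>) (\<lambda>n. ln \<bar>y n\<bar>)) (case_sum (\<lambda>_. 1) (\<lambda>_. -1)) t"
proof -
  have supp: "finite {n. x n \<noteq> 0}" "finite {n. y n \<noteq> 0}"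
    using assms unfolding Rinf_def by auto
  show ?thesis
    unfolding exp_sum_def sum.Plus[OF supp] power_sum_def by (simp add: powr_def sum_negf mult.commute)
qed

lemma tnorm_coincidences_finite:
  assumes x: "x \<in> Rinf" and y: "y \<in> Rinf" and "t\<^sub>0 > 0" "tnorm t\<^sub>0 x \<noteq> tnorm t\<^sub>0 y"
  shows "finite {t::real. t > 0 \<and> tnorm t x = tnorm t y}"
proof -
  define I where "I = {n. x n \<noteq> 0} <+> {n. y n \<noteq> 0}"
  define e where "e = case_sum (\<lambda>n. ln \<bar>x n\<bar>) (\<lambda>n. ln \<bar>y n\<bar>)"
  define c :: "nat + nat \<Rightarrow> real" where "c = case_sum (\<lambda>_. 1) (\<lambda>_. -1)"
  have diff: "power_sum t x - power_sum t y = exp_sum I e c t" for t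
    unfolding I_def e_def c_def by (rule power_sum_diff_exp_sum[OF x y])
  have "finite I" using x y unfolding Rinf_def I_def by auto
  moreover have "exp_sum I e c t\<^sub>0 \<noteq> 0"
    using assms(3,4) diff[of t\<^sub>0] tnorm_eq_iff_power_sum_eq by auto
  ultimately have "finite {t. exp_sum I e c t = 0}" by (rule exp_sum_zeros_finite)
  then show ?thesis
    by (rule rev_finite_subset) (auto simp: tnorm_eq_iff_power_sum_eq simp flip: diff)
qed

lemma tnorm_coincidences_finite_family:
  assumes "X \<subseteq> Rinf" "finite X"
  shows "finite {s::real. s > 0 \<and> (\<exists>x\<in>X. \<exists>y\<in>X. tnorm s x = tnorm s y \<and>
                                   (\<exists>t>0. tnorm t x \<noteq> tnorm t y))}"
proof -
  define P where "P = {(x, y) \<in> X \<times> X. \<exists>t>0. tnorm t x \<noteq> tnorm t y}"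
  have "finite P" using assms(2) by (intro finite_subset[of P "X \<times> X"]) (auto simp: P_def)
  moreover have "finite {t::real. t > 0 \<and> tnorm t x = tnorm t y}" if "(x, y) \<in> P" for x y
    using that assms(1) tnorm_coincidences_finite unfolding P_def by blast
  ultimately have "finite (\<Union>(x, y)\<in>P. {t::real. t > 0 \<and> tnorm t x = tnorm t y})" by auto
  then show ?thesis by (rule rev_finite_subset) (auto simp: P_def)
qed

theorem mainTheorem8:
  shows "(\<forall>x\<in>Rinf. \<forall>y\<in>Rinf.
            (\<exists>t>0. tnorm t x \<noteq> tnorm t y) \<longrightarrow>
            finite {t::real. t > 0 \<and> tnorm t x = tnorm t y})
       \<and> (\<forall>X. X \<subseteq> Rinf \<longrightarrow> finite X \<longrightarrow>
            finite {s::real. s > 0 \<and> (\<exists>x\<in>X. \<exists>y\<in>X. tnorm s x = tnorm s y \<and>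
                                   (\<exists>t>0. tnorm t x \<noteq> tnorm t y))})"
  using tnorm_coincidences_finite tnorm_coincidences_finite_family by blast

end
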